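(* For $h\in\mathbb N$ and $0\le m<h$ let $c(m;h)=\frac{\#\{0\le x<h: x^2\equiv m\bmod h\}}{h}$. Then the sequence of squares $(\ell^2)_{\ell\ge1}$ distributes regularly within residue classes, i.e. $\lim_{L\to\infty}\frac1L\#\{\ell\le L:\ell^2\equiv m\bmod h\}=c(m;h)$ for all $h,m$ and $c(m;h_1h_2)=c(m;h_1)c(m;h_2)$ for coprime $h_1,h_2$. Moreover, for every $k\ge2$ and every $k$-DFA $(Q,\{0,\dots,k-1\},\delta,q_0)$ admitting a synchronizing word, $$\lim_{\lambda\to\infty}\sum_{0\le m<k^\lambda,\ m\notin S_\lambda}c(m;k^\lambda)=0.$$
   Context: A word $w$ over $\{0,\dots,k-1\}$ is synchronizing for the DFA if $\delta(q,w)=\delta(q',w)$ for all states $q,q'$ ($\delta$ extended to words letter by letter). $S$ is the set of $n\ge0$ whose base-$k$ expansion $(n)_k$ (most significant digit first, $(0)_k$ empty) is synchronizing, and $S_\lambda=S\cap[0,k^\lambda-1]$. *)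

theory Defs
  imports Complex_Main
begin

text \<open>Base-k expansion, most significant digit first; the expansion of 0 is empty.
  (For k < 2 we return [] by convention; only k >= 2 is used.)\<close>
function base_digits :: "nat \<Rightarrow> nat \<Rightarrow> nat list" where
  "base_digits k n = (if n = 0 \<or> k < 2 then [] else base_digits k (n div k) @ [n mod k])"
  by auto
termination by (relation "measure snd") auto

definition delta_star :: "('q \<Rightarrow> nat \<Rightarrow> 'q) \<Rightarrow> 'q \<Rightarrow> nat list \<Rightarrow> 'q" where
  "delta_star \<delta> q w = foldl \<delta> q w"

text \<open>A word over the alphabet {0,...,k-1} is synchronizing for the DFA with transition
  function delta (state set = the finite type 'q).\<close>
definition synchronizing :: "nat \<Rightarrow> ('q \<Rightarrow> nat \<Rightarrow> 'q) \<Rightarrow> nat list \<Rightarrow> bool" where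
  "synchronizing k \<delta> w \<longleftrightarrow> set w \<subseteq> {..<k} \<and> (\<forall>q q'. delta_star \<delta> q w = delta_star \<delta> q' w)"

definition S_lam :: "nat \<Rightarrow> ('q \<Rightarrow> nat \<Rightarrow> 'q) \<Rightarrow> nat \<Rightarrow> nat set" where
  "S_lam k \<delta> lam = {n. n < k ^ lam \<and> synchronizing k \<delta> (base_digits k n)}"

definition c_sq :: "nat \<Rightarrow> nat \<Rightarrow> real" where
  "c_sq m h = real (card {x. x < h \<and> x ^ 2 mod h = m mod h}) / real h"

end

theory Submission
  imports Defs "HOL-Number_Theory.Cong"
begin

(* The density of squares in a residue class mod h exists because l^2 mod h is h-periodic
   in l, and it is multiplicative by the Chinese remainder theorem.

   For the last claim put lam = t + M with M = lam div 2 and write x = a + k^t b with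
   a < k^t, b < k^M. The digits of x^2 mod k^lam above position t are
   (a^2 div k^t + 2ab) mod k^M. Unless q^s divides a for some prime q dividing k (a
   proportion at most (k+1)/2^s of all a), gcd (2a, k^M) divides k^s, and then, as b
   varies, the digits above position t + s are uniformly distributed. A base-k expansion
   containing the word 1w, with w synchronizing, is synchronizing; and uniformly random
   digits avoid 1w in all of n disjoint blocks of length r = |w| + 1 with probability
   (1 - k^-r)^n. Letting lam and then s tend to infinity gives the claim. *)

section \<open>Counting by residue classes\<close>

lemma card_less_mult_eq_sum:
  fixes K L :: nat
  assumes "K > 0"
  shows "card {x. x < K * L \<and> P x} = (\<Sum>a<K. card {b. b < L \<and> P (a + K * b)})"
proof -
  define B where "B a = (\<lambda>b. a + K * b) ` {b. b < L \<and> P (a + K * b)}" for a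
  have split: "{x. x < K * L \<and> P x} = (\<Union>a<K. B a)"
  proof (rule set_eqI, rule iffI)
    fix x assume x: "x \<in> {x. x < K * L \<and> P x}"
    have "x = x mod K + K * (x div K)" by simp
    moreover have "x div K < L" using x by (simp add: less_mult_imp_div_less mult.commute)
    ultimately show "x \<in> (\<Union>a<K. B a)"
      using x assms unfolding B_def by (auto intro!: bexI[of _ "x mod K"] image_eqI[of _ _ "x div K"])
  next
    fix x assume "x \<in> (\<Union>a<K. B a)"
    then obtain a b where ab: "a < K" "b < L" "P (a + K * b)" "x = a + K * b"
      unfolding B_def by auto
    have "a + K * b < K * (b + 1)" using ab by simp
    also have "\<dots> \<le> K * L" using ab by (intro mult_left_mono) auto
    finally show "x \<in> {x. x < K * L \<and> P x}" using ab by simp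
  qed
  have "card (\<Union>a<K. B a) = (\<Sum>a<K. card (B a))"
    unfolding B_def by (rule card_UN_disjoint) (auto, metis mod_mult_self2 mod_less)
  also have "\<dots> = (\<Sum>a<K. card {b. b < L \<and> P (a + K * b)})"
    unfolding B_def using assms by (intro sum.cong refl card_image) (auto simp: inj_on_def)
  finally show ?thesis using split by simp
qed

lemma card_less_mult_le:
  fixes K L C :: nat
  assumes "K > 0" and "A \<subseteq> {..<K}"
    and fibre: "\<And>a. a < K \<Longrightarrow> a \<notin> A \<Longrightarrow> card {b. b < L \<and> P (a + K * b)} \<le> C"
  shows "card {x. x < K * L \<and> P x} \<le> card A * L + K * C"
proof -
  have "card {b. b < L \<and> P (a + K * b)} \<le> of_bool (a \<in> A) * L + C" if "a < K" for a
  proof (cases "a \<in> A")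
    case True
    have "card {b. b < L \<and> P (a + K * b)} \<le> card {..<L}" by (rule card_mono) auto
    then show ?thesis using True by simp
  qed (use fibre that in auto)
  then have "(\<Sum>a<K. card {b. b < L \<and> P (a + K * b)}) \<le> (\<Sum>a<K. of_bool (a \<in> A) * L + C)"
    by (intro sum_mono) simp
  also have "\<dots> = card A * L + K * C"
    using assms(2) by (simp add: sum.distrib sum_distrib_right[symmetric] Int_absorb1 Int_def[symmetric])
  finally show ?thesis using card_less_mult_eq_sum[OF assms(1)] by simp
qed

lemma periodic_add_mult:
  fixes a h j :: nat
  assumes "\<And>x. P (x + h) = P x"
  shows "P (a + h * j) = P a"
proof (induction j)
  case (Suc j)
  then show ?case using assms[of "a + h * j"] by (simp add: algebra_simps)
qed simp

lemma card_less_mult_periodic: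
  fixes h q :: nat
  assumes "h > 0" and "\<And>x. P (x + h) = P x"
  shows "card {x. x < h * q \<and> P x} = q * card {a. a < h \<and> P a}"
proof -
  have "card {x. x < h * q \<and> P x} = (\<Sum>a<h. if P a then q else 0)"
    unfolding card_less_mult_eq_sum[OF assms(1)]
    by (intro sum.cong refl) (simp add: periodic_add_mult[of P h, OF assms(2)])
  also have "\<dots> = q * card {a. a < h \<and> P a}"
    by (simp add: sum.If_cases Int_def)
  finally show ?thesis .
qed

lemma card_less_periodic_bounds:
  fixes h n :: nat
  assumes "h > 0" and "\<And>x. P (x + h) = P x"
  defines "C \<equiv> card {a. a < h \<and> P a}"
  shows "h * card {x. x < n \<and> P x} \<le> n * C + h * h"
    and "n * C \<le> h * card {x. x < n \<and> P x} + h * C"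
proof -
  define q where "q = n div h"
  have "h * q \<le> n" unfolding q_def by (simp add: mult.commute)
  have "n < h * q + h" unfolding q_def using assms(1)
    by (metis div_mult_mod_eq mod_less_divisor nat_add_left_cancel_less mult.commute)
  have full: "card {x. x < h * q \<and> P x} = q * C"
    unfolding C_def by (rule card_less_mult_periodic[of h P, OF assms(1,2)])
  have "card {x. x < n \<and> P x} \<le> card ({x. x < h * q \<and> P x} \<union> {h * q..<n})"
    by (intro card_mono) auto
  also have "\<dots> \<le> q * C + (n - h * q)"
    using card_Un_le[of "{x. x < h * q \<and> P x}" "{h * q..<n}"] full by simp
  also have "\<dots> \<le> q * C + h" using \<open>n < h * q + h\<close> by simp
  finally have "h * card {x. x < n \<and> P x} \<le> h * (q * C + h)" by simp
  also have "\<dots> = (h * q) * C + h * h" by (simp add: algebra_simps)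
  also have "\<dots> \<le> n * C + h * h" using \<open>h * q \<le> n\<close> by (intro add_mono mult_right_mono) auto
  finally show "h * card {x. x < n \<and> P x} \<le> n * C + h * h" .
  have "card {x. x < h * q \<and> P x} \<le> card {x. x < n \<and> P x}"
    using \<open>h * q \<le> n\<close> by (intro card_mono) auto
  then have "h * (q * C) \<le> h * card {x. x < n \<and> P x}" using full by simp
  have "n * C \<le> (h * q + h) * C" using \<open>n < h * q + h\<close> by (intro mult_right_mono) auto
  also have "\<dots> = h * (q * C) + h * C" by (simp add: algebra_simps)
  also have "\<dots> \<le> h * card {x. x < n \<and> P x} + h * C" using \<open>h * (q * C) \<le> _\<close> by simp
  finally show "n * C \<le> h * card {x. x < n \<and> P x} + h * C" .
qed

lemma card_atLeastAtMost_periodic_bounds: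
  fixes h L :: nat
  assumes "h > 0" and "\<And>x. P (x + h) = P x"
  defines "C \<equiv> card {a. a < h \<and> P a}"
  shows "h * card {l \<in> {1..L}. P l} \<le> L * C + h * (h + 1)"
    and "L * C \<le> h * card {l \<in> {1..L}. P l} + h * (h + 1)"
proof -
  define cnt where "cnt = card {l \<in> {1..L}. P l}"
  define B where "B = card {x. x < L + 1 \<and> P x}"
  note below = card_less_periodic_bounds[of h P "L + 1", OF assms(1,2), folded C_def B_def]
  have "C \<le> h" unfolding C_def by (rule order_trans[OF card_mono[of "{..<h}"]]) auto
  have "cnt \<le> B" unfolding cnt_def B_def by (intro card_mono) auto
  have "B \<le> card (insert 0 {l \<in> {1..L}. P l})" unfolding B_def by (intro card_mono) auto
  also have "\<dots> \<le> cnt + 1" unfolding cnt_def by (simp add: card_insert_if)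
  finally have "B \<le> cnt + 1" .
  have "h * cnt \<le> h * B" using \<open>cnt \<le> B\<close> by simp
  also have "\<dots> \<le> (L + 1) * C + h * h" by (rule below(1))
  also have "\<dots> \<le> L * C + h * (h + 1)" using \<open>C \<le> h\<close> by (simp add: algebra_simps)
  finally show "h * cnt \<le> L * C + h * (h + 1)" .
  have "L * C \<le> (L + 1) * C" by simp
  also have "\<dots> \<le> h * B + h * C" by (rule below(2))
  also have "\<dots> \<le> h * (cnt + 1) + h * h"
    using \<open>B \<le> cnt + 1\<close> \<open>C \<le> h\<close> by (intro add_mono mult_le_mono2)
  also have "\<dots> = h * cnt + h * (h + 1)" by (simp add: algebra_simps)
  finally show "L * C \<le> h * cnt + h * (h + 1)" .
qed

lemma tendsto_density_periodic:
  fixes h :: nat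
  assumes "h > 0" and "\<And>x. P (x + h) = P x"
  shows "(\<lambda>L. real (card {l \<in> {1..L}. P l}) / real L) \<longlonglongrightarrow> real (card {a. a < h \<and> P a}) / real h"
proof -
  define C where "C = card {a. a < h \<and> P a}"
  define cnt where "cnt L = card {l \<in> {1..L}. P l}" for L
  note bounds = card_atLeastAtMost_periodic_bounds[of h P, OF assms, folded C_def cnt_def]
  have "\<bar>real (cnt L) / real L - real C / real h\<bar> \<le> \<bar>real (h + 1) / real L\<bar> * 1" if "L > 0" for L
  proof -
    have "real (h * cnt L) \<le> real (L * C + h * (h + 1))"
      and "real (L * C) \<le> real (h * cnt L + h * (h + 1))"
      using bounds[of L] by (simp_all only: of_nat_le_iff)
    then have "real (cnt L) / real L \<le> real C / real h + real (h + 1) / real L"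
      and "real C / real h \<le> real (cnt L) / real L + real (h + 1) / real L"
      using that assms by (simp_all add: field_simps)
    then show ?thesis by (simp add: abs_le_iff)
  qed
  then have "(\<lambda>L. real (cnt L) / real L - real C / real h) \<longlonglongrightarrow> 0"
    by (intro tendsto_0_le[OF lim_const_over_n[of "real (h + 1)"], where K = 1]
        eventually_mono[OF eventually_gt_at_top[of 0]]) simp
  then show ?thesis unfolding C_def cnt_def by (simp add: LIM_zero_iff)
qed

lemma tendsto_density_squares_mod:
  fixes h m :: nat
  assumes "0 < h"
  shows "(\<lambda>L. real (card {l \<in> {1..L}. l ^ 2 mod h = m mod h}) / real L) \<longlonglongrightarrow> c_sq m h"
proof -
  have "(x + h) ^ 2 mod h = x ^ 2 mod h" for x
    by (metis mod_add_self2 power_mod)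
  then show ?thesis unfolding c_sq_def by (intro tendsto_density_periodic[OF assms]) simp
qed

section \<open>Multiplicativity\<close>

lemma bij_betw_mod_pair:
  fixes m1 m2 :: nat
  assumes "m1 > 0" "m2 > 0" "coprime m1 m2"
  shows "bij_betw (\<lambda>x. (x mod m1, x mod m2)) {..<m1 * m2} ({..<m1} \<times> {..<m2})"
proof -
  have inj: "inj_on (\<lambda>x. (x mod m1, x mod m2)) {..<m1 * m2}"
  proof (rule inj_onI)
    fix x y assume "x \<in> {..<m1 * m2}" "y \<in> {..<m1 * m2}" "(x mod m1, x mod m2) = (y mod m1, y mod m2)"
    then have "[x = y] (mod m1)" "[x = y] (mod m2)" by (simp_all add: cong_def)
    then have "[x = y] (mod m1 * m2)" using coprime_cong_mult_nat assms(3) by blast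
    then show "x = y" using \<open>x \<in> {..<m1 * m2}\<close> \<open>y \<in> {..<m1 * m2}\<close> by (simp add: cong_def)
  qed
  have "(\<lambda>x. (x mod m1, x mod m2)) ` {..<m1 * m2} = {..<m1} \<times> {..<m2}"
    using assms(1,2) by (intro card_subset_eq) (auto simp: card_image[OF inj] card_cartesian_product)
  with inj show ?thesis by (simp add: bij_betw_def)
qed

lemma card_mod_pair_product:
  fixes m1 m2 :: nat
  assumes "m1 > 0" "m2 > 0" "coprime m1 m2"
  shows "card {x. x < m1 * m2 \<and> P (x mod m1) \<and> Q (x mod m2)}
    = card {a. a < m1 \<and> P a} * card {b. b < m2 \<and> Q b}"
proof -
  note bij = bij_betw_mod_pair[OF assms]
  have "(\<lambda>x. (x mod m1, x mod m2)) ` {x. x < m1 * m2 \<and> P (x mod m1) \<and> Q (x mod m2)}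
      = {a. a < m1 \<and> P a} \<times> {b. b < m2 \<and> Q b}"
  proof (intro equalityI subsetI)
    fix p assume "p \<in> {a. a < m1 \<and> P a} \<times> {b. b < m2 \<and> Q b}"
    moreover from this obtain x where "x < m1 * m2" "p = (x mod m1, x mod m2)"
      using bij by (auto simp: bij_betw_def)
    ultimately show "p \<in> (\<lambda>x. (x mod m1, x mod m2)) ` {x. x < m1 * m2 \<and> P (x mod m1) \<and> Q (x mod m2)}"
      by auto
  qed (use assms in auto)
  then have "bij_betw (\<lambda>x. (x mod m1, x mod m2)) {x. x < m1 * m2 \<and> P (x mod m1) \<and> Q (x mod m2)}
      ({a. a < m1 \<and> P a} \<times> {b. b < m2 \<and> Q b})"
    by (intro bij_betw_subset[OF bij]) auto
  then show ?thesis by (simp add: bij_betw_same_card card_cartesian_product)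
qed

lemma c_sq_mult:
  fixes h1 h2 m :: nat
  assumes "0 < h1" "0 < h2" "coprime h1 h2"
  shows "c_sq m (h1 * h2) = c_sq m h1 * c_sq m h2"
proof -
  have "[x ^ 2 = m] (mod h1 * h2) \<longleftrightarrow> [x ^ 2 = m] (mod h1) \<and> [x ^ 2 = m] (mod h2)" for x
    using coprime_cong_mult_nat[OF _ _ assms(3)] cong_dvd_modulus_nat dvd_triv_left dvd_triv_right
    by blast
  then have "{x. x < h1 * h2 \<and> x ^ 2 mod (h1 * h2) = m mod (h1 * h2)}
      = {x. x < h1 * h2 \<and> (x mod h1) ^ 2 mod h1 = m mod h1 \<and> (x mod h2) ^ 2 mod h2 = m mod h2}"
    by (simp only: cong_def power_mod)
  then show ?thesis
    using card_mod_pair_product[OF assms, where P = "\<lambda>a. a ^ 2 mod h1 = m mod h1"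
        and Q = "\<lambda>b. b ^ 2 mod h2 = m mod h2"]
    unfolding c_sq_def by simp
qed

section \<open>Base-k digits and synchronizing words\<close>

declare base_digits.simps [simp del]

lemma base_digits_0 [simp]: "base_digits k 0 = []"
  by (simp add: base_digits.simps)

lemma base_digits_rec: "n \<noteq> 0 \<Longrightarrow> 2 \<le> k \<Longrightarrow> base_digits k n = base_digits k (n div k) @ [n mod k]"
  by (simp add: base_digits.simps)

lemma set_base_digits: "2 \<le> k \<Longrightarrow> set (base_digits k n) \<subseteq> {..<k}"
proof (induction k n rule: base_digits.induct)
  case (1 k n)
  then show ?case by (cases "n = 0") (auto simp: base_digits_rec)
qed

lemma base_digits_div_power: "2 \<le> k \<Longrightarrow> \<exists>v. base_digits k m = base_digits k (m div k ^ p) @ v"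
proof (induction p)
  case (Suc p)
  then obtain v where v: "base_digits k m = base_digits k (m div k ^ p) @ v" by blast
  have "m div k ^ Suc p = m div k ^ p div k" by (metis div_mult2_eq power_Suc2)
  then show ?case
    using v Suc.prems by (cases "m div k ^ p = 0") (auto simp: base_digits_rec[of "m div k ^ p"])
qed simp

lemma base_digits_mod_power: "2 \<le> k \<Longrightarrow> \<exists>u. base_digits k m = u @ base_digits k (m mod k ^ p)"
proof (induction p arbitrary: m)
  case (Suc p)
  define z where "z = m mod k ^ Suc p"
  have "z div k = m div k mod k ^ p"
    unfolding z_def using Suc.prems by (simp add: mod_mult2_eq div_mult2_eq mult.commute)
  moreover have "z mod k = m mod k"
    unfolding z_def by (simp add: mod_mod_cancel)
  moreover obtain u where "base_digits k (m div k) = u @ base_digits k (m div k mod k ^ p)"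
    using Suc by blast
  moreover have "m \<noteq> 0" if "z \<noteq> 0" using that unfolding z_def by (metis mod_0)
  ultimately have "base_digits k m = u @ base_digits k z" if "z \<noteq> 0"
    using that Suc.prems by (simp add: base_digits_rec[of m] base_digits_rec[of z])
  then show ?case unfolding z_def by (cases "z = 0") (auto simp: z_def)
qed simp

lemma base_digits_infix:
  "2 \<le> k \<Longrightarrow> \<exists>u v. base_digits k m = u @ base_digits k (m div k ^ p mod k ^ j) @ v"
  using base_digits_div_power[of k m p] base_digits_mod_power[of k "m div k ^ p" j]
  by (metis append.assoc)

definition digits_value :: "nat \<Rightarrow> nat list \<Rightarrow> nat" where
  "digits_value k ds = foldl (\<lambda>acc d. acc * k + d) 0 ds"

lemma digits_value_snoc [simp]: "digits_value k (ds @ [d]) = digits_value k ds * k + d"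
  by (simp add: digits_value_def)

lemma digits_value_less: "set ds \<subseteq> {..<k} \<Longrightarrow> digits_value k ds < k ^ length ds"
proof (induction ds rule: rev_induct)
  case (snoc d ds)
  then have "digits_value k ds + 1 \<le> k ^ length ds" and "d < k" by auto
  then have "digits_value k ds * k + d < (digits_value k ds + 1) * k" by simp
  also have "\<dots> \<le> k ^ length ds * k" using \<open>digits_value k ds + 1 \<le> _\<close> by (rule mult_right_mono) simp
  finally show ?case by (simp add: mult.commute)
qed (simp add: digits_value_def)

lemma base_digits_digits_value:
  assumes "2 \<le> k" "set ds \<subseteq> {..<k}" "ds \<noteq> []" "hd ds \<noteq> 0"
  shows "base_digits k (digits_value k ds) = ds"
proof -
  have "base_digits k (digits_value k ds) = ds \<and> digits_value k ds \<noteq> 0"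
    using assms(2-4)
  proof (induction ds rule: rev_induct)
    case (snoc d ds)
    show ?case
    proof (cases "ds = []")
      case True
      then show ?thesis using snoc.prems assms(1) by (simp add: base_digits_rec[of d] digits_value_def)
    next
      case False
      with snoc have "base_digits k (digits_value k ds) = ds" "digits_value k ds \<noteq> 0" "d < k" by auto
      then show ?thesis using assms(1) by (simp add: base_digits_rec[of "digits_value k ds * k + d"])
    qed
  qed simp
  then show ?thesis ..
qed

lemma synchronizing_append:
  assumes "synchronizing k \<delta> w" "set (u @ w @ v) \<subseteq> {..<k}"
  shows "synchronizing k \<delta> (u @ w @ v)"
  using assms unfolding synchronizing_def delta_star_def by simp metis

section \<open>Squares modulo powers of k\<close>

lemma bij_betw_add_mod:
  fixes h L :: nat
  assumes "L > 0"
  shows "bij_betw (\<lambda>u. (h + u) mod L) {..<L} {..<L}"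
proof -
  have inj: "inj_on (\<lambda>u. (h + u) mod L) {..<L}"
  proof (rule inj_onI)
    fix x y assume "x \<in> {..<L}" "y \<in> {..<L}" "(h + x) mod L = (h + y) mod L"
    then have "[h + x = h + y] (mod L)" by (simp add: cong_def)
    then have "[x = y] (mod L)" by (simp add: cong_add_lcancel_nat)
    then show "x = y" using \<open>x \<in> {..<L}\<close> \<open>y \<in> {..<L}\<close> by (simp add: cong_def)
  qed
  have "(\<lambda>u. (h + u) mod L) ` {..<L} = {..<L}"
    using assms by (intro card_subset_eq) (auto simp: card_image[OF inj])
  with inj show ?thesis by (simp add: bij_betw_def)
qed

lemma affine_mod_div_shift:
  fixes e L c g b0 b u :: nat
  assumes "e > 0" and b0: "[g * b0 = e] (mod e * L)"
  shows "(c + g * ((b + u * b0) mod (e * L))) mod (e * L) div e = ((c + g * b) mod (e * L) div e + u) mod L"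
proof -
  define R where "R = (c + g * b) mod (e * L)"
  have "[c + g * ((b + u * b0) mod (e * L)) = c + g * (b + u * b0)] (mod e * L)"
    by (intro cong_add cong_mult) (auto simp: cong_def)
  also have "c + g * (b + u * b0) = c + g * b + u * (g * b0)" by (simp add: algebra_simps)
  also have "[c + g * b + u * (g * b0) = R + u * e] (mod e * L)"
    unfolding R_def by (intro cong_add cong_mult b0) (auto simp: cong_def)
  finally have "(c + g * ((b + u * b0) mod (e * L))) mod (e * L) = (R + u * e) mod (e * L)"
    unfolding cong_def .
  also have "\<dots> div e = (R + u * e) div e mod L"
    using assms(1) by (simp add: mod_mult2_eq)
  also have "(R + u * e) div e = R div e + u"
    using assms(1) by simp
  finally show ?thesis unfolding R_def .
qed

text \<open>Double counting: for every b, the shifts b + u b0 with u < L hit each value below L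
  exactly once.\<close>
lemma card_affine_mod_div:
  fixes e L K c g b0 :: nat
  assumes "e > 0" "L > 0" and K: "K = e * L" and b0: "[g * b0 = e] (mod K)"
  shows "card {b. b < K \<and> Q ((c + g * b) mod K div e)} = e * card {v. v < L \<and> Q v}"
proof -
  define T where "T b = (c + g * b) mod K div e" for b
  define S where "S b u = (of_bool (Q (T ((b + u * b0) mod K))) :: nat)" for b u
  have "K > 0" using assms by simp
  have shift: "T ((b + u * b0) mod K) = (T b + u) mod L" for b u
    unfolding T_def K using affine_mod_div_shift[OF assms(1) b0[unfolded K]] .
  have row: "(\<Sum>u<L. S b u) = card {v. v < L \<and> Q v}" for b
  proof -
    have "(\<Sum>u<L. S b u) = (\<Sum>u<L. (\<lambda>v. of_bool (Q v) :: nat) ((T b + u) mod L))"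
      unfolding S_def shift ..
    also have "\<dots> = (\<Sum>v<L. of_bool (Q v))"
      by (rule sum.reindex_bij_betw[OF bij_betw_add_mod[OF assms(2)]])
    finally show ?thesis by (simp add: Int_def)
  qed
  have col: "(\<Sum>b<K. S b u) = card {b. b < K \<and> Q (T b)}" for u
  proof -
    have "(\<Sum>b<K. S b u) = (\<Sum>b<K. (\<lambda>b. of_bool (Q (T b)) :: nat) ((u * b0 + b) mod K))"
      unfolding S_def by (simp add: add.commute)
    also have "\<dots> = (\<Sum>b<K. of_bool (Q (T b)))"
      by (rule sum.reindex_bij_betw[OF bij_betw_add_mod[OF \<open>K > 0\<close>]])
    finally show ?thesis by (simp add: Int_def)
  qed
  have "K * card {v. v < L \<and> Q v} = (\<Sum>b<K. \<Sum>u<L. S b u)" using row by simp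
  also have "\<dots> = (\<Sum>u<L. \<Sum>b<K. S b u)" by (rule sum.swap)
  also have "\<dots> = L * card {b. b < K \<and> Q (T b)}" using col by simp
  finally show ?thesis using assms(2) unfolding K T_def by (simp add: algebra_simps)
qed

definition avoids_blocks :: "nat \<Rightarrow> nat \<Rightarrow> nat \<Rightarrow> nat \<Rightarrow> nat \<Rightarrow> bool" where
  "avoids_blocks k r V n v \<longleftrightarrow> (\<forall>i<n. v div k ^ (r * i) mod k ^ r \<noteq> V)"

lemma avoids_blocks_Suc:
  assumes "a < k ^ r"
  shows "avoids_blocks k r V (Suc n) (a + k ^ r * b) \<longleftrightarrow> a \<noteq> V \<and> avoids_blocks k r V n b"
proof -
  have "k ^ r \<noteq> 0" using assms by linarith
  have "(a + k ^ r * b) div k ^ (r * Suc i) = b div k ^ (r * i)" for i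
    using assms \<open>k ^ r \<noteq> 0\<close> by (simp add: power_add div_mult2_eq)
  then show ?thesis
    using assms unfolding avoids_blocks_def by (auto simp: All_less_Suc2)
qed

lemma card_avoids_blocks:
  fixes k r V e :: nat
  assumes "V < k ^ r"
  shows "card {v. v < k ^ (r * n) * k ^ e \<and> avoids_blocks k r V n v} = (k ^ r - 1) ^ n * k ^ e"
proof (induction n)
  case 0
  then show ?case by (simp add: avoids_blocks_def)
next
  case (Suc n)
  have "k ^ r > 0" using assms by linarith
  have "k ^ (r * Suc n) * k ^ e = k ^ r * (k ^ (r * n) * k ^ e)" by (simp add: power_add mult.assoc)
  then have "card {v. v < k ^ (r * Suc n) * k ^ e \<and> avoids_blocks k r V (Suc n) v}
      = (\<Sum>a<k ^ r. card {b. b < k ^ (r * n) * k ^ e \<and> avoids_blocks k r V (Suc n) (a + k ^ r * b)})"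
    by (simp only: card_less_mult_eq_sum[OF \<open>k ^ r > 0\<close>])
  also have "\<dots> = (\<Sum>a<k ^ r. if a = V then 0 else card {b. b < k ^ (r * n) * k ^ e \<and> avoids_blocks k r V n b})"
    by (intro sum.cong refl) (simp add: avoids_blocks_Suc)
  also have "\<dots> = (k ^ r - 1) * card {b. b < k ^ (r * n) * k ^ e \<and> avoids_blocks k r V n b}"
  proof -
    have "{..<k ^ r} \<inter> - {a. a = V} = {..<k ^ r} - {V}" by auto
    then show ?thesis using assms by (simp add: sum.If_cases)
  qed
  finally show ?case using Suc.IH by simp
qed

lemma gcd_double_dvd_power:
  fixes k a s M :: nat
  assumes k: "k \<ge> 2" and nd: "\<forall>q. prime q \<and> q dvd k \<longrightarrow> \<not> q ^ s dvd a"
  shows "gcd (2 * a) (k ^ M) dvd k ^ s"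
proof -
  obtain q0 where "prime q0" "q0 dvd k" using prime_factor_nat[of k] k by auto
  then have "a \<noteq> 0" using nd by (metis dvd_0_right)
  show ?thesis
  proof (rule multiplicity_le_imp_dvd)
    fix q :: nat assume q: "prime q"
    show "multiplicity q (gcd (2 * a) (k ^ M)) \<le> multiplicity q (k ^ s)"
    proof (cases "q dvd k")
      case False
      then have "\<not> q dvd gcd (2 * a) (k ^ M)"
        using q prime_dvd_power_nat by (meson dvd_trans gcd_dvd2)
      then show ?thesis by (simp add: not_dvd_imp_multiplicity_0)
    next
      case True
      have "multiplicity q (gcd (2 * a) (k ^ M)) \<le> multiplicity q (2 * a)"
        by (rule dvd_imp_multiplicity_le) (use \<open>a \<noteq> 0\<close> in auto)
      moreover have "multiplicity q (2 * a) = multiplicity q 2 + multiplicity q a"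
        by (rule prime_elem_multiplicity_mult_distrib) (use q \<open>a \<noteq> 0\<close> in auto)
      moreover have "multiplicity q (2::nat) < 2"
      proof (rule multiplicity_lessI)
        have "q ^ 2 \<ge> 2 ^ 2" using prime_ge_2_nat[OF q] by (rule power_mono) auto
        then show "\<not> q ^ 2 dvd (2::nat)" by (auto dest: dvd_imp_le)
      qed (use q in \<open>auto dest: prime_gt_1_nat\<close>)
      moreover have "multiplicity q a < s"
        by (rule multiplicity_lessI) (use nd q True \<open>a \<noteq> 0\<close> in \<open>auto dest: prime_gt_1_nat\<close>)
      moreover have "s \<le> multiplicity q (k ^ s)"
      proof -
        have "multiplicity q k \<ge> 1"
          using True k q by (intro multiplicity_geI) (auto dest: prime_gt_1_nat)
        then show ?thesis
          using q k by (simp add: prime_elem_multiplicity_power_distrib)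
      qed
      ultimately show ?thesis by linarith
    qed
  qed (use \<open>a \<noteq> 0\<close> in simp)
qed

lemma card_multiples_less_le:
  fixes n d :: nat
  assumes "d dvd n"
  shows "card {a. a < n \<and> d dvd a} * d \<le> n"
proof (cases "d = 0")
  case False
  have "{a. a < n \<and> d dvd a} \<subseteq> (\<lambda>j. d * j) ` {..<n div d}"
  proof
    fix a assume "a \<in> {a. a < n \<and> d dvd a}"
    then obtain j where "a = d * j" "d * j < n" by auto
    moreover have "d * j < d * (n div d)" using \<open>d * j < n\<close> assms by simp
    ultimately show "a \<in> (\<lambda>j. d * j) ` {..<n div d}" by auto
  qed
  then have "card {a. a < n \<and> d dvd a} \<le> card ((\<lambda>j. d * j) ` {..<n div d})"
    by (intro card_mono) auto
  also have "\<dots> \<le> n div d"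
    using card_image_le[of "{..<n div d}" "\<lambda>j. d * j"] by simp
  finally have "card {a. a < n \<and> d dvd a} * d \<le> n div d * d" by simp
  then show ?thesis using assms by simp
qed (use assms in simp)

lemma card_prime_power_multiples_le:
  fixes k s t :: nat
  assumes "k \<ge> 2" "s \<le> t"
  shows "card {a. a < k ^ t \<and> (\<exists>q. prime q \<and> q dvd k \<and> q ^ s dvd a)} * 2 ^ s \<le> (k + 1) * k ^ t"
proof -
  define D where "D = {q. prime q \<and> q dvd k}"
  have "D \<subseteq> {..k}" unfolding D_def using assms(1) by (auto dest: dvd_imp_le)
  then have "finite D" and "card D \<le> k + 1" using finite_subset card_mono[of "{..k}" D] by auto
  have each: "card {a. a < k ^ t \<and> q ^ s dvd a} * 2 ^ s \<le> k ^ t" if "q \<in> D" for q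
  proof -
    have q: "prime q" "q dvd k" using that unfolding D_def by auto
    have "card {a. a < k ^ t \<and> q ^ s dvd a} * 2 ^ s \<le> card {a. a < k ^ t \<and> q ^ s dvd a} * q ^ s"
      using prime_ge_2_nat[OF q(1)] by (intro mult_left_mono power_mono) auto
    also have "\<dots> \<le> k ^ t"
      using q assms(2) by (intro card_multiples_less_le) (auto simp: dvd_power_le)
    finally show ?thesis .
  qed
  have "{a. a < k ^ t \<and> (\<exists>q. prime q \<and> q dvd k \<and> q ^ s dvd a)} \<subseteq> (\<Union>q\<in>D. {a. a < k ^ t \<and> q ^ s dvd a})"
    unfolding D_def by blast
  from card_mono[OF _ this] have "card {a. a < k ^ t \<and> (\<exists>q. prime q \<and> q dvd k \<and> q ^ s dvd a)}
      \<le> (\<Sum>q\<in>D. card {a. a < k ^ t \<and> q ^ s dvd a})"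
    using card_UN_le[OF \<open>finite D\<close>, of "\<lambda>q. {a. a < k ^ t \<and> q ^ s dvd a}"] \<open>finite D\<close>
    by (simp add: le_trans)
  then have "card {a. a < k ^ t \<and> (\<exists>q. prime q \<and> q dvd k \<and> q ^ s dvd a)} * 2 ^ s
      \<le> (\<Sum>q\<in>D. card {a. a < k ^ t \<and> q ^ s dvd a} * 2 ^ s)"
    by (simp add: sum_distrib_right[symmetric])
  also have "\<dots> \<le> card D * k ^ t" using each sum_mono[of D _ "\<lambda>_. k ^ t"] by simp
  also have "\<dots> \<le> (k + 1) * k ^ t" using \<open>card D \<le> k + 1\<close> by (rule mult_right_mono) simp
  finally show ?thesis .
qed

text \<open>The term (k^t b)^2 vanishes modulo k^(t+M) since M \<le> t.\<close>
lemma square_mod_div_power: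
  fixes k a b t M :: nat
  assumes "k > 0" "M \<le> t"
  shows "(a + k ^ t * b) ^ 2 mod (k ^ t * k ^ M) div k ^ t = (a ^ 2 div k ^ t + 2 * a * b) mod k ^ M"
proof -
  obtain z where z: "k ^ t = k ^ M * z" using le_imp_power_dvd[OF assms(2)] by blast
  define A where "A = a ^ 2 mod k ^ t"
  define Q where "Q = a ^ 2 div k ^ t + 2 * a * b + k ^ M * (z * b ^ 2)"
  have "(a + k ^ t * b) ^ 2 = a ^ 2 + k ^ t * (2 * a * b + k ^ t * b ^ 2)"
    by (simp add: power2_eq_square algebra_simps)
  also have "\<dots> = A + k ^ t * Q"
    unfolding A_def Q_def using div_mult_mod_eq[of "a ^ 2" "k ^ t"] z by (simp add: algebra_simps)
  finally have sq: "(a + k ^ t * b) ^ 2 = A + k ^ t * Q" .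
  have "A < k ^ t" unfolding A_def using assms(1) by simp
  then have "(A + k ^ t * Q) mod (k ^ t * k ^ M) = k ^ t * (Q mod k ^ M) + A"
    using assms(1) by (simp add: mod_mult2_eq)
  then have "(a + k ^ t * b) ^ 2 mod (k ^ t * k ^ M) div k ^ t = Q mod k ^ M"
    using sq \<open>A < k ^ t\<close> assms(1) by simp
  then show ?thesis unfolding Q_def by simp
qed

lemma sum_c_sq_eq_card:
  fixes N :: nat and A :: "nat set"
  assumes "N > 0" "A \<subseteq> {..<N}"
  shows "(\<Sum>m\<in>A. c_sq m N) = real (card {x. x < N \<and> x ^ 2 mod N \<in> A}) / real N"
proof -
  have "finite A" using assms(2) finite_subset by blast
  have "(\<Sum>m\<in>A. c_sq m N) = (\<Sum>m\<in>A. real (card {x. x < N \<and> x ^ 2 mod N = m}) / real N)"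
    unfolding c_sq_def using assms(2) by (intro sum.cong refl) auto
  also have "\<dots> = real (\<Sum>m\<in>A. card {x. x < N \<and> x ^ 2 mod N = m}) / real N"
    by (simp add: sum_divide_distrib)
  also have "(\<Sum>m\<in>A. card {x. x < N \<and> x ^ 2 mod N = m}) = card (\<Union>m\<in>A. {x. x < N \<and> x ^ 2 mod N = m})"
    by (rule card_UN_disjoint[symmetric]) (use \<open>finite A\<close> in auto)
  also have "(\<Union>m\<in>A. {x. x < N \<and> x ^ 2 mod N = m}) = {x. x < N \<and> x ^ 2 mod N \<in> A}" by auto
  finally show ?thesis .
qed

lemma card_square_avoids_blocks:
  fixes k a s M t :: nat
  assumes "k > 0" "s \<le> M" "M \<le> t" and "gcd (2 * a) (k ^ M) dvd k ^ s"
  shows "card {b. b < k ^ M \<and> avoids_blocks k r V n ((a + k ^ t * b) ^ 2 mod k ^ (t + M) div k ^ t div k ^ s)}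
    = k ^ s * card {v. v < k ^ (M - s) \<and> avoids_blocks k r V n v}"
proof -
  obtain b0 where b0: "[(2 * a) * b0 = k ^ s] (mod k ^ M)"
    using cong_solve_dvd_nat[OF assms(4)] by blast
  have KM: "k ^ M = k ^ s * k ^ (M - s)" using \<open>s \<le> M\<close> by (simp flip: power_add)
  have "(a + k ^ t * b) ^ 2 mod k ^ (t + M) div k ^ t = (a ^ 2 div k ^ t + (2 * a) * b) mod k ^ M" for b
    using square_mod_div_power[OF assms(1,3)] by (simp add: power_add mult.assoc)
  then show ?thesis
    using card_affine_mod_div[OF _ _ KM b0, where Q = "avoids_blocks k r V n"] assms(1) by simp
qed

text \<open>The leading digit 1 ensures that leading zeros of w are not lost in the base-k
  expansion of the block.\<close>
lemma avoids_blocks_if_not_synchronizing: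
  fixes \<delta> :: "'q \<Rightarrow> nat \<Rightarrow> 'q"
  assumes k: "2 \<le> k" and w: "synchronizing k \<delta> w"
    and y: "\<not> synchronizing k \<delta> (base_digits k y)"
  shows "avoids_blocks k (length w + 1) (digits_value k (1 # w)) n (y div k ^ p)"
  unfolding avoids_blocks_def
proof (intro allI impI notI)
  fix i
  let ?r = "length w + 1"
  assume "y div k ^ p div k ^ (?r * i) mod k ^ ?r = digits_value k (1 # w)"
  then have block: "y div k ^ (p + ?r * i) mod k ^ ?r = digits_value k (1 # w)"
    by (simp only: power_add div_mult2_eq)
  have "set w \<subseteq> {..<k}" using w unfolding synchronizing_def by simp
  then have pattern: "base_digits k (digits_value k (1 # w)) = 1 # w"
    using k by (intro base_digits_digits_value) auto
  obtain u v where "base_digits k y = u @ base_digits k (y div k ^ (p + ?r * i) mod k ^ ?r) @ v"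
    using base_digits_infix[OF k] by blast
  then have digits: "base_digits k y = (u @ [1]) @ w @ v"
    unfolding block pattern by simp
  have "synchronizing k \<delta> ((u @ [1]) @ w @ v)"
    by (rule synchronizing_append[OF w]) (use set_base_digits[OF k, of y] digits in simp)
  then have "synchronizing k \<delta> (base_digits k y)" unfolding digits .
  with y show False by contradiction
qed

lemma card_not_synchronizing_squares_le:
  fixes \<delta> :: "'q \<Rightarrow> nat \<Rightarrow> 'q"
  assumes k: "2 \<le> k" and w: "synchronizing k \<delta> w" and "s \<le> M" "M \<le> t"
  defines "r \<equiv> length w + 1"
  shows "card {x. x < k ^ (t + M) \<and> \<not> synchronizing k \<delta> (base_digits k (x ^ 2 mod k ^ (t + M)))}
    \<le> card {a. a < k ^ t \<and> (\<exists>q. prime q \<and> q dvd k \<and> q ^ s dvd a)} * k ^ M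
      + k ^ t * (k ^ s * ((k ^ r - 1) ^ ((M - s) div r) * k ^ ((M - s) mod r)))"
proof -
  define V where "V = digits_value k (1 # w)"
  define n where "n = (M - s) div r"
  define avoids where "avoids x \<longleftrightarrow> avoids_blocks k r V n (x ^ 2 mod k ^ (t + M) div k ^ t div k ^ s)" for x
  have "k > 0" using k by simp
  have "V < k ^ r"
    using digits_value_less[of "1 # w" k] w k unfolding V_def r_def synchronizing_def by auto
  have "avoids x" if "\<not> synchronizing k \<delta> (base_digits k (x ^ 2 mod k ^ (t + M)))" for x
    using avoids_blocks_if_not_synchronizing[OF k w that, of n "t + s"]
    unfolding avoids_def V_def r_def by (simp only: power_add div_mult2_eq)
  then have "{x. x < k ^ (t + M) \<and> \<not> synchronizing k \<delta> (base_digits k (x ^ 2 mod k ^ (t + M)))}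
      \<subseteq> {x. x < k ^ t * k ^ M \<and> avoids x}"
    unfolding power_add by blast
  then have "card {x. x < k ^ (t + M) \<and> \<not> synchronizing k \<delta> (base_digits k (x ^ 2 mod k ^ (t + M)))}
      \<le> card {x. x < k ^ t * k ^ M \<and> avoids x}"
    by (intro card_mono) auto
  also have "\<dots> \<le> card {a. a < k ^ t \<and> (\<exists>q. prime q \<and> q dvd k \<and> q ^ s dvd a)} * k ^ M
      + k ^ t * (k ^ s * ((k ^ r - 1) ^ n * k ^ ((M - s) mod r)))"
  proof (rule card_less_mult_le)
    fix a assume "a < k ^ t" "a \<notin> {a. a < k ^ t \<and> (\<exists>q. prime q \<and> q dvd k \<and> q ^ s dvd a)}"
    then have "gcd (2 * a) (k ^ M) dvd k ^ s" by (intro gcd_double_dvd_power[OF k]) auto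
    then have "card {b. b < k ^ M \<and> avoids (a + k ^ t * b)}
        = k ^ s * card {v. v < k ^ (M - s) \<and> avoids_blocks k r V n v}"
      unfolding avoids_def by (rule card_square_avoids_blocks[OF \<open>k > 0\<close> \<open>s \<le> M\<close> \<open>M \<le> t\<close>])
    also have "k ^ (M - s) = k ^ (r * n) * k ^ ((M - s) mod r)"
      unfolding n_def by (simp flip: power_add)
    finally show "card {b. b < k ^ M \<and> avoids (a + k ^ t * b)}
        \<le> k ^ s * ((k ^ r - 1) ^ n * k ^ ((M - s) mod r))"
      using card_avoids_blocks[OF \<open>V < k ^ r\<close>] by simp
  qed (use \<open>k > 0\<close> in auto)
  finally show ?thesis unfolding n_def .
qed

lemma power_minus_one_ratio:
  fixes k r s n e :: nat
  assumes "k > 0"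
  shows "real (k ^ s * ((k ^ r - 1) ^ n * k ^ e)) / real k ^ (s + r * n + e) = (1 - 1 / real k ^ r) ^ n"
proof -
  have "real (k ^ r - 1) = real k ^ r - 1" using assms by (simp add: of_nat_diff)
  then have "real (k ^ s * ((k ^ r - 1) ^ n * k ^ e)) = real k ^ s * (real k ^ r - 1) ^ n * real k ^ e"
    by simp
  moreover have "real k ^ (s + r * n + e) = real k ^ s * (real k ^ r) ^ n * real k ^ e"
    by (simp add: power_add power_mult)
  moreover have "(real k ^ r - 1) ^ n / (real k ^ r) ^ n = (1 - 1 / real k ^ r) ^ n"
    using assms by (simp add: power_divide[symmetric] diff_divide_distrib)
  ultimately show ?thesis using assms by simp
qed

lemma sum_c_sq_not_synchronizing_le:
  fixes \<delta> :: "'q \<Rightarrow> nat \<Rightarrow> 'q"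
  assumes k: "2 \<le> k" and w: "synchronizing k \<delta> w" and "s \<le> lam div 2"
  defines "r \<equiv> length w + 1"
  shows "(\<Sum>m \<in> {m. m < k ^ lam \<and> m \<notin> S_lam k \<delta> lam}. c_sq m (k ^ lam))
    \<le> real (k + 1) / 2 ^ s + (1 - 1 / real k ^ r) ^ ((lam div 2 - s) div r)"
proof -
  define M t n e where "M = lam div 2" and "t = lam - M" and "n = (M - s) div r" and "e = (M - s) mod r"
  define bad where "bad = card {a. a < k ^ t \<and> (\<exists>q. prime q \<and> q dvd k \<and> q ^ s dvd a)}"
  define G where "G = k ^ s * ((k ^ r - 1) ^ n * k ^ e)"
  have "lam = t + M" "s \<le> M" "M \<le> t" unfolding M_def t_def using assms(3) by auto
  have "M = s + r * n + e" using \<open>s \<le> M\<close> unfolding n_def e_def by simp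
  have "k > 0" using k by simp
  have "(\<Sum>m \<in> {m. m < k ^ lam \<and> m \<notin> S_lam k \<delta> lam}. c_sq m (k ^ lam))
      = real (card {x. x < k ^ lam \<and> x ^ 2 mod k ^ lam \<in> {m. m < k ^ lam \<and> m \<notin> S_lam k \<delta> lam}}) / real (k ^ lam)"
    by (rule sum_c_sq_eq_card) (use \<open>k > 0\<close> in auto)
  also have "{x. x < k ^ lam \<and> x ^ 2 mod k ^ lam \<in> {m. m < k ^ lam \<and> m \<notin> S_lam k \<delta> lam}}
      = {x. x < k ^ (t + M) \<and> \<not> synchronizing k \<delta> (base_digits k (x ^ 2 mod k ^ (t + M)))}"
    unfolding S_lam_def \<open>lam = t + M\<close> using \<open>k > 0\<close> by simp
  also have "real (card \<dots>) / real (k ^ lam) \<le> real (bad * k ^ M + k ^ t * G) / real (k ^ lam)"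
    using card_not_synchronizing_squares_le[OF k w \<open>s \<le> M\<close> \<open>M \<le> t\<close>]
    unfolding bad_def G_def n_def e_def r_def by (intro divide_right_mono) (simp_all only: of_nat_le_iff of_nat_0_le_iff)
  also have "\<dots> = real bad / real k ^ t + real G / real k ^ M"
    using \<open>k > 0\<close> \<open>lam = t + M\<close> by (simp add: power_add field_simps)
  also have "real bad / real k ^ t \<le> real (k + 1) / 2 ^ s"
  proof -
    have "real (bad * 2 ^ s) \<le> real ((k + 1) * k ^ t)"
      using card_prime_power_multiples_le[OF k, of s t] \<open>s \<le> M\<close> \<open>M \<le> t\<close>
      unfolding bad_def by (simp only: of_nat_le_iff)
    then show ?thesis using \<open>k > 0\<close> by (simp add: field_simps)
  qed
  also have "real G / real k ^ M = (1 - 1 / real k ^ r) ^ n"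
    unfolding G_def \<open>M = s + r * n + e\<close> using power_minus_one_ratio[OF \<open>k > 0\<close>] .
  finally show ?thesis unfolding n_def M_def by simp
qed

lemma tendsto_sum_c_sq_not_synchronizing:
  fixes \<delta> :: "'q \<Rightarrow> nat \<Rightarrow> 'q"
  assumes k: "2 \<le> k" and "\<exists>w. synchronizing k \<delta> w"
  shows "(\<lambda>lam. \<Sum>m \<in> {m. m < k ^ lam \<and> m \<notin> S_lam k \<delta> lam}. c_sq m (k ^ lam)) \<longlonglongrightarrow> 0"
proof (rule LIMSEQ_I)
  obtain w where w: "synchronizing k \<delta> w" using assms(2) by blast
  define r where "r = length w + 1"
  define \<rho> where "\<rho> = 1 - 1 / real k ^ r"
  have "0 \<le> \<rho>" "\<rho> < 1" unfolding \<rho>_def using k by auto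
  fix \<epsilon> :: real assume "0 < \<epsilon>"
  obtain s where s: "(1 / 2) ^ s < \<epsilon> / (2 * real (k + 1))"
    using real_arch_pow_inv[of "\<epsilon> / (2 * real (k + 1))" "1 / 2"] \<open>0 < \<epsilon>\<close> by auto
  obtain N where N: "\<rho> ^ N < \<epsilon> / 2"
    using real_arch_pow_inv[of "\<epsilon> / 2" \<rho>] \<open>0 < \<epsilon>\<close> \<open>\<rho> < 1\<close> by auto
  have "norm ((\<Sum>m \<in> {m. m < k ^ lam \<and> m \<notin> S_lam k \<delta> lam}. c_sq m (k ^ lam)) - 0) < \<epsilon>"
    if "lam \<ge> 2 * (s + r * N)" for lam
  proof -
    have "s \<le> lam div 2" "r * N \<le> lam div 2 - s" using that by auto
    then have "N \<le> (lam div 2 - s) div r" unfolding r_def by (simp add: less_eq_div_iff_mult_less_eq mult.commute)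
    then have "\<rho> ^ ((lam div 2 - s) div r) \<le> \<rho> ^ N"
      using \<open>0 \<le> \<rho>\<close> \<open>\<rho> < 1\<close> by (intro power_decreasing) auto
    moreover have "real (k + 1) / 2 ^ s < \<epsilon> / 2"
      using s by (simp add: field_simps power_one_over)
    moreover have "(\<Sum>m \<in> {m. m < k ^ lam \<and> m \<notin> S_lam k \<delta> lam}. c_sq m (k ^ lam))
        \<le> real (k + 1) / 2 ^ s + \<rho> ^ ((lam div 2 - s) div r)"
      using sum_c_sq_not_synchronizing_le[OF k w \<open>s \<le> lam div 2\<close>] unfolding \<rho>_def r_def .
    ultimately have "(\<Sum>m \<in> {m. m < k ^ lam \<and> m \<notin> S_lam k \<delta> lam}. c_sq m (k ^ lam)) < \<epsilon>"
      using N by linarith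
    moreover have "0 \<le> (\<Sum>m \<in> {m. m < k ^ lam \<and> m \<notin> S_lam k \<delta> lam}. c_sq m (k ^ lam))"
      unfolding c_sq_def by (intro sum_nonneg) auto
    ultimately show ?thesis by simp
  qed
  then show "\<exists>no. \<forall>lam\<ge>no. norm ((\<Sum>m \<in> {m. m < k ^ lam \<and> m \<notin> S_lam k \<delta> lam}. c_sq m (k ^ lam)) - 0) < \<epsilon>"
    by blast
qed

theorem proposition8p2:
  shows "(\<forall>h m. 0 < h \<and> m < h \<longrightarrow>
            (\<lambda>L. real (card {l \<in> {1..L}. l ^ 2 mod h = m mod h}) / real L) \<longlonglongrightarrow> c_sq m h)
       \<and> (\<forall>h1 h2 m. 0 < h1 \<and> 0 < h2 \<and> coprime h1 h2 \<longrightarrow>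
            c_sq m (h1 * h2) = c_sq m h1 * c_sq m h2)
       \<and> (\<forall>k (\<delta> :: 'q::finite \<Rightarrow> nat \<Rightarrow> 'q). 2 \<le> k \<and> (\<exists>w. synchronizing k \<delta> w) \<longrightarrow>
            (\<lambda>lam. \<Sum>m \<in> {m. m < k ^ lam \<and> m \<notin> S_lam k \<delta> lam}. c_sq m (k ^ lam)) \<longlonglongrightarrow> 0)"
  using tendsto_density_squares_mod c_sq_mult tendsto_sum_c_sq_not_synchronizing by blast

end
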